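(* Let $V=\mathbb{C}^6$ and let $\ell,\ell'\subset\mathbb{P}(\wedge^2V)$ be two distinct general lines meeting at a point $\omega''$. Let $d=\mathbb{P}(D)$ and $d'=\mathbb{P}(D')$ be their pivots, and suppose $d\cap d'=\emptyset$ in $\mathbb{P}^5=\mathbb{P}(V)$. Then there exist a basis $e_0,e_1$ of $D$ and a basis $e_2,e_3$ of $D'$ such that $\omega''=[e_0\wedge e_2+e_1\wedge e_3]$.
   Context: Elements of $\wedge^2\mathbb{C}^6$ are identified with skew-symmetric $6\times6$ matrices; rank means matrix rank. Fix a basis $f_0,\dots,f_5$ of $V$. A projective line in $\mathbb{P}(\wedge^2V)$ all of whose points have rank four is called general if it is $PGL_6$-equivalent to the line $\ell_g$ spanned by $f_0\wedge f_2+f_1\wedge f_3$ and $f_0\wedge f_4+f_1\wedge f_5$. A general line $\ell$ is contained in $\mathbb{P}(W\wedge V)$ (the embedded tangent space to $\mathbb{G}(1,5)$ at $[W]$) for a unique $2$-dimensional subspace $W\subset V$ (for $\ell_g$, $W=\langle f_0,f_1\rangle$); the projective line $\mathbb{P}(W)\subset\mathbb{P}(V)$ is called the pivot of $\ell$. Work over $\mathbb{C}$. *)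

theory Defs
  imports "HOL-Analysis.Analysis"
begin

text \<open>V = C^6 is complex^6; elements of wedge^2 V are skew-symmetric 6x6 complex matrices.\<close>

type_synonym cvec = "complex^6"
type_synonym cmat = "complex^6^6"

definition skew :: "cmat \<Rightarrow> bool" where
  "skew M \<longleftrightarrow> transpose M = - M"

definition wedge :: "cvec \<Rightarrow> cvec \<Rightarrow> cmat" where
  "wedge u v = (\<chi> i j. u$i * v$j - v$i * u$j)"

definition msc :: "complex \<Rightarrow> cmat \<Rightarrow> cmat" where
  "msc a A = (\<chi> i j. a * A$i$j)"

definition span2 :: "cmat \<Rightarrow> cmat \<Rightarrow> cmat set" where
  "span2 A B = {msc a A + msc b B | a b. True}"

definition indep2 :: "cmat \<Rightarrow> cmat \<Rightarrow> bool" where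
  "indep2 A B \<longleftrightarrow> (\<forall>a b. msc a A + msc b B = 0 \<longrightarrow> a = 0 \<and> b = 0)"

definition vspan2 :: "cvec \<Rightarrow> cvec \<Rightarrow> cvec set" where
  "vspan2 u v = {a *s u + b *s v | a b. True}"

definition vindep2 :: "cvec \<Rightarrow> cvec \<Rightarrow> bool" where
  "vindep2 u v \<longleftrightarrow> (\<forall>a b. a *s u + b *s v = 0 \<longrightarrow> a = 0 \<and> b = 0)"

definition two_dim_subspace :: "cvec set \<Rightarrow> bool" where
  "two_dim_subspace D \<longleftrightarrow> (\<exists>u v. vindep2 u v \<and> D = vspan2 u v)"

definition cindep :: "cvec set \<Rightarrow> bool" where
  "cindep S \<longleftrightarrow> finite S \<and> (\<forall>c. (\<Sum>v\<in>S. c v *s v) = 0 \<longrightarrow> (\<forall>v\<in>S. c v = 0))"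

definition crank :: "cmat \<Rightarrow> nat" where
  "crank M = Max {card S | S. S \<subseteq> {column j M | j. True} \<and> cindep S}"

text \<open>A projective line in P(wedge^2 V), represented by its 2-dimensional affine cone
  (a 2-dimensional subspace of skew matrices).\<close>
definition proj_line :: "cmat set \<Rightarrow> bool" where
  "proj_line L \<longleftrightarrow> (\<exists>A B. skew A \<and> skew B \<and> indep2 A B \<and> L = span2 A B)"

definition rank_four_line :: "cmat set \<Rightarrow> bool" where
  "rank_four_line L \<longleftrightarrow> proj_line L \<and> (\<forall>M\<in>L. M \<noteq> 0 \<longrightarrow> crank M = 4)"

definition fb :: "6 \<Rightarrow> cvec" where
  "fb i = axis i 1"

definition line_g :: "cmat set" where
  "line_g = span2 (wedge (fb 0) (fb 2) + wedge (fb 1) (fb 3))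
                  (wedge (fb 0) (fb 4) + wedge (fb 1) (fb 5))"

text \<open>GL_6 acts on wedge^2 V by g (u wedge v) = gu wedge gv, i.e. M \<mapsto> g M g^T;
  scalars act trivially projectively, so PGL_6-equivalence of lines is GL_6-equivalence of cones.\<close>
definition general_line :: "cmat set \<Rightarrow> bool" where
  "general_line L \<longleftrightarrow> rank_four_line L \<and>
     (\<exists>g::cmat. det g \<noteq> 0 \<and> L = (\<lambda>M. g ** M ** transpose g) ` line_g)"

text \<open>W wedge V as a subspace of wedge^2 V: finite sums of w wedge x with w in W.\<close>
definition wedge_sp :: "cvec set \<Rightarrow> cmat set" where
  "wedge_sp W = {M. \<exists>(n::nat) w x. (\<forall>i<n. w i \<in> W) \<and> M = (\<Sum>i<n. wedge (w i) (x i))}"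

text \<open>D is (the cone over) the pivot of L: the 2-dimensional subspace W with L \<subseteq> W wedge V
  (unique for general lines).\<close>
definition is_pivot :: "cmat set \<Rightarrow> cvec set \<Rightarrow> bool" where
  "is_pivot L D \<longleftrightarrow> two_dim_subspace D \<and> L \<subseteq> wedge_sp D"

end

theory Submission
  imports Defs
begin

(* Write D = <u0, u1> and D' = <u2, u3>, so that omega = wedge u0 p + wedge u1 q = wedge u2 r + wedge u3 s.
   Since D and D' meet only in 0, the vectors u0, ..., u3 are independent. In a basis extending them
   the first expression kills every entry of omega outside the rows and columns of u0, u1 and the
   second every entry outside those of u2, u3; hence omega lies in the wedge of D and D':
   omega = wedge u0 (A u2 + B u3) + wedge u1 (C u2 + E u3). If AE - BC = 0 this is a single wedge,
   of rank at most 2, contradicting rank four. Otherwise e2 = A u2 + B u3, e3 = C u2 + E u3 is a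
   basis of D' with omega = wedge u0 e2 + wedge u1 e3. *)

lemma axis_component: "axis k a $ i = (if i = k then a else 0)"
  by (simp add: axis_def)

lemma wedge_add_left: "wedge (u + v) x = wedge u x + wedge v x"
  by (simp add: wedge_def vec_eq_iff algebra_simps)

lemma wedge_add_right: "wedge u (x + y) = wedge u x + wedge u y"
  by (simp add: wedge_def vec_eq_iff algebra_simps)

lemma wedge_scale_left: "wedge (a *s u) x = wedge u (a *s x)"
  by (simp add: wedge_def vec_eq_iff algebra_simps)

lemma wedge_zero_right [simp]: "wedge u 0 = 0"
  by (simp add: wedge_def vec_eq_iff)

lemma wedge_sum_right: "wedge u (\<Sum>i\<in>I. f i) = (\<Sum>i\<in>I. wedge u (f i))"
  by (induction I rule: infinite_finite_induct) (simp_all add: wedge_add_right)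

lemma wedge_axis_nth:
  "wedge (axis k 1) y $ i $ j = (if i = k then y $ j else 0) - (if j = k then y $ i else 0)"
  by (simp add: wedge_def axis_component)

lemma column_wedge: "column j (wedge x y) = y $ j *s x - x $ j *s y"
  by (simp add: column_def wedge_def vec_eq_iff algebra_simps)

lemma congruence_wedge: "g ** wedge x y ** transpose g = wedge (g *v x) (g *v y)"
proof -
  have "(g ** wedge x y ** transpose g) $ i $ j = wedge (g *v x) (g *v y) $ i $ j" for i j
  proof -
    have "(g ** wedge x y ** transpose g) $ i $ j =
       (\<Sum>l\<in>UNIV. (\<Sum>k\<in>UNIV. g$i$k * (x$k * y$l - y$k * x$l)) * g$j$l)"
      by (simp add: matrix_matrix_mult_def wedge_def transpose_def)
    also have "\<dots> = (\<Sum>k\<in>UNIV. g$i$k * x$k) * (\<Sum>l\<in>UNIV. g$j$l * y$l)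
                   - (\<Sum>k\<in>UNIV. g$i$k * y$k) * (\<Sum>l\<in>UNIV. g$j$l * x$l)"
      by (simp add: algebra_simps sum_subtractf sum_distrib_left sum_distrib_right, subst sum.swap, simp)
    also have "\<dots> = wedge (g *v x) (g *v y) $ i $ j"
      by (simp add: wedge_def matrix_vector_mult_def)
    finally show ?thesis .
  qed
  then show ?thesis by (simp add: vec_eq_iff)
qed

lemma congruence_add: "g ** (A + B) ** transpose g = g ** A ** transpose g + g ** B ** transpose g"
  by (simp add: matrix_add_ldistrib matrix_matrix_mult_def vec_eq_iff sum.distrib algebra_simps)

lemma congruence_inverse:
  fixes g h M :: "'a::comm_semiring_1 ^ 'n ^ 'n"
  assumes "g ** h = mat 1"
  shows "g ** (h ** M ** transpose h) ** transpose g = M"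
proof -
  have "g ** (h ** M ** transpose h) ** transpose g = (g ** h) ** M ** transpose (g ** h)"
    by (simp add: matrix_mul_assoc matrix_transpose_mul)
  then show ?thesis
    by (simp add: assms)
qed

lemma wedge_sp_vspan2:
  assumes "M \<in> wedge_sp (vspan2 u v)"
  obtains p q where "M = wedge u p + wedge v q"
proof -
  from assms obtain n :: nat and w x where w: "\<forall>i<n. w i \<in> vspan2 u v"
    and M: "M = (\<Sum>i<n. wedge (w i) (x i))"
    unfolding wedge_sp_def by blast
  have "\<forall>i. \<exists>c. i < n \<longrightarrow> w i = fst c *s u + snd c *s v"
    using w unfolding vspan2_def by force
  then obtain c where c: "\<forall>i<n. w i = fst (c i) *s u + snd (c i) *s v"
    by metis
  have "M = (\<Sum>i<n. wedge u (fst (c i) *s x i) + wedge v (snd (c i) *s x i))"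
    unfolding M by (rule sum.cong) (simp_all add: c wedge_add_left wedge_scale_left)
  also have "\<dots> = wedge u (\<Sum>i<n. fst (c i) *s x i) + wedge v (\<Sum>i<n. snd (c i) *s x i)"
    by (simp add: sum.distrib wedge_sum_right)
  finally show ?thesis
    by (rule that)
qed

lemma crank_wedge_le: "crank (wedge x y) \<le> 2"
proof -
  let ?C = "{card S | S. S \<subseteq> {column j (wedge x y) | j. True} \<and> cindep S}"
  have bound: "k \<le> 2" if "k \<in> ?C" for k
  proof -
    obtain S where k: "k = card S" and S: "S \<subseteq> {column j (wedge x y) | j. True}" "cindep S"
      using \<open>k \<in> ?C\<close> by blast
    have span: "S \<subseteq> vec.span {x, y}"
    proof
      fix z assume "z \<in> S"
      then obtain j where "z = y $ j *s x - x $ j *s y"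
        using S(1) by (auto simp: column_wedge)
      then show "z \<in> vec.span {x, y}"
        by (simp add: vec.span_diff vec.span_scale vec.span_base)
    qed
    have indep: "vec.independent S"
      using S(2) by (auto simp: cindep_def vec.dependent_finite)
    have "card S \<le> card {x, y}"
      using vec.independent_span_bound[of "{x, y}" S] span indep by simp
    also have "\<dots> \<le> 2"
      by (simp add: card_insert_le_m1)
    finally show ?thesis using k by simp
  qed
  have "0 \<in> ?C"
    by (rule CollectI, rule exI[of _ "{}"]) (simp add: cindep_def)
  moreover have "finite ?C"
    using bound by (intro finite_subset[of ?C "{..2}"] subsetI) auto
  ultimately have "crank (wedge x y) \<in> ?C"
    unfolding crank_def by (intro Max_in) auto
  then show ?thesis
    using bound by blast
qed

lemma is_pivot_point:
  assumes "is_pivot L D" "\<omega> \<in> L"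
  obtains u v p q where "vindep2 u v" "D = vspan2 u v" "\<omega> = wedge u p + wedge v q"
proof -
  obtain u v where "vindep2 u v" "D = vspan2 u v" "L \<subseteq> wedge_sp D"
    using assms(1) unfolding is_pivot_def two_dim_subspace_def by blast
  moreover obtain p q where "\<omega> = wedge u p + wedge v q"
    using assms(2) calculation(2,3) wedge_sp_vspan2 by blast
  ultimately show ?thesis
    using that by blast
qed

lemma general_line_point_not_wedge:
  assumes "general_line L" "\<omega> \<in> L" "\<omega> \<noteq> 0"
  shows "\<omega> \<noteq> wedge x y"
proof -
  have "crank \<omega> = 4"
    using assms unfolding general_line_def rank_four_line_def by blast
  then show ?thesis
    using crank_wedge_le[of x y] by auto
qed

lemma wedge_pairs_decomposable:
  assumes "A * E = B * C"
  obtains x y where "wedge u0 (A *s v0 + B *s v1) + wedge u1 (C *s v0 + E *s v1) = wedge x y"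
proof (cases "A = 0 \<and> B = 0")
  case True
  then show ?thesis
    using that[of u1 "C *s v0 + E *s v1"] by simp
next
  case False
  obtain t where t: "C = t * A" "E = t * B"
  proof (cases "A = 0")
    case True
    with False assms have "B \<noteq> 0" "C = 0"
      by auto
    then show ?thesis
      using that[of "E / B"] True by simp
  next
    case False
    then show ?thesis
      using that[of "C / A"] assms by (simp add: field_simps)
  qed
  have "wedge u0 (A *s v0 + B *s v1) + wedge u1 (C *s v0 + E *s v1)
      = wedge (u0 + t *s u1) (A *s v0 + B *s v1)"
    by (simp add: t wedge_add_left wedge_scale_left vector_add_ldistrib vector_smult_assoc)
  then show ?thesis
    by (rule that)
qed

lemma independent_change_to_axes:
  fixes S :: "('a::field ^ 'n) set"
  assumes "vec.independent S"
  obtains g h :: "'a ^ 'n ^ 'n" and k :: "'a ^ 'n \<Rightarrow> 'n"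
  where "g ** h = mat 1" "inj_on k S" "\<And>u. u \<in> S \<Longrightarrow> h *v u = axis (k u) 1"
proof -
  obtain B where B: "S \<subseteq> B" "vec.independent B" "UNIV \<subseteq> vec.span B"
    using vec.maximal_independent_subset_extend[OF subset_UNIV assms] by metis
  have "finite B"
    using vec.finiteI_independent[OF B(2)] .
  have "card B = vec.dim (UNIV :: ('a ^ 'n) set)"
    using vec.basis_card_eq_dim[OF subset_UNIV B(3) B(2)] .
  then have "card (UNIV :: 'n set) = card B"
    by (simp add: vec_dim_card card_cart_basis)
  then obtain f where f: "bij_betw f (UNIV :: 'n set) B"
    using finite_same_card_bij[of "UNIV :: 'n set" B] \<open>finite B\<close> by auto
  define g :: "'a ^ 'n ^ 'n" where "g = (\<chi> i j. f j $ i)"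
  have g_axis: "g *v axis j 1 = f j" for j
    by (simp add: g_def matrix_vector_mult_def axis_def vec_eq_iff if_distrib cong: if_cong)
  have "\<forall>c. (\<Sum>i\<in>UNIV. c i *s column i g) = 0 \<longrightarrow> (\<forall>i. c i = 0)"
  proof (intro allI impI)
    fix c :: "'n \<Rightarrow> 'a" and i
    assume sum_zero: "(\<Sum>i\<in>UNIV. c i *s column i g) = 0"
    have "(\<Sum>b\<in>B. c (inv_into UNIV f b) *s b) = (\<Sum>i\<in>UNIV. c i *s column i g)"
      using sum.reindex_bij_betw[OF f, of "\<lambda>b. c (inv_into UNIV f b) *s b"] f
      by (simp add: bij_betw_inv_into_left g_def column_def)
    then have "\<forall>b\<in>B. c (inv_into UNIV f b) = 0"
      using sum_zero B(2) \<open>finite B\<close> by (auto simp: vec.dependent_finite)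
    then have "c (inv_into UNIV f (f i)) = 0"
      using f bij_betwE by blast
    then show "c i = 0"
      using f by (simp add: bij_betw_inv_into_left)
  qed
  then have "\<exists>h. h ** g = mat 1"
    by (rule matrix_left_invertible_independent_columns[THEN iffD2])
  then obtain h :: "'a ^ 'n ^ 'n" where hg: "h ** g = mat 1"
    by blast
  have "g ** h = mat 1"
    using hg matrix_left_right_inverse by blast
  moreover have "inj_on (inv_into UNIV f) S"
    using inj_on_subset[OF bij_betw_imp_inj_on[OF bij_betw_inv_into[OF f]] B(1)] .
  moreover have "h *v u = axis (inv_into UNIV f u) 1" if "u \<in> S" for u
  proof -
    have "h *v f j = axis j 1" for j
      by (metis g_axis hg matrix_vector_mul_assoc matrix_vector_mul_lid)
    then show ?thesis
      using that B(1) f by (metis bij_betw_inv_into_right subsetD)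
  qed
  ultimately show ?thesis
    by (rule that)
qed

lemma wedge_axis_pairs_inter:
  fixes M :: cmat
  assumes "distinct [k0, k1, k2, k3]"
    and "M = wedge (axis k0 1) p + wedge (axis k1 1) q"
    and "M = wedge (axis k2 1) r + wedge (axis k3 1) s"
  shows "M = wedge (axis k0 1) (M$k0$k2 *s axis k2 1 + M$k0$k3 *s axis k3 1)
           + wedge (axis k1 1) (M$k1$k2 *s axis k2 1 + M$k1$k3 *s axis k3 1)"
proof -
  have zero: "M $ i $ j = 0"
    if "i \<notin> {k0, k1} \<and> j \<notin> {k0, k1} \<or> i \<notin> {k2, k3} \<and> j \<notin> {k2, k3}" for i j
  proof -
    have "M $ i $ j = 0" if "i \<notin> {k0, k1}" "j \<notin> {k0, k1}"
      using that by (simp add: assms(2) wedge_axis_nth)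
    moreover have "M $ i $ j = 0" if "i \<notin> {k2, k3}" "j \<notin> {k2, k3}"
      using that by (simp add: assms(3) wedge_axis_nth)
    ultimately show ?thesis using that by blast
  qed
  have skew: "M $ k2 $ k0 = - M $ k0 $ k2" "M $ k3 $ k0 = - M $ k0 $ k3"
    "M $ k2 $ k1 = - M $ k1 $ k2" "M $ k3 $ k1 = - M $ k1 $ k3"
    using assms(1) by (simp_all add: assms(2) wedge_axis_nth)
  have entries: "M $ i $ j = (wedge (axis k0 1) (M$k0$k2 *s axis k2 1 + M$k0$k3 *s axis k3 1)
           + wedge (axis k1 1) (M$k1$k2 *s axis k2 1 + M$k1$k3 *s axis k3 1)) $ i $ j" for i j
    using assms(1) zero[of i j] skew
    by (cases "i \<in> {k0, k1, k2, k3}"; cases "j \<in> {k0, k1, k2, k3}") (auto simp: wedge_axis_nth axis_component)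
  then show ?thesis
    by (intro vec_eq_iff[THEN iffD2] allI entries)
qed

lemma wedge_pairs_inter:
  fixes u0 u1 u2 u3 p q r s :: cvec
  assumes "distinct [u0, u1, u2, u3]" "vec.independent {u0, u1, u2, u3}"
    and "wedge u0 p + wedge u1 q = wedge u2 r + wedge u3 s"
  obtains A B C E
  where "wedge u0 p + wedge u1 q = wedge u0 (A *s u2 + B *s u3) + wedge u1 (C *s u2 + E *s u3)"
proof -
  let ?U = "{u0, u1, u2, u3}"
  obtain g h :: cmat and k where gh: "g ** h = mat 1" and k: "inj_on k ?U"
    and h: "\<And>u. u \<in> ?U \<Longrightarrow> h *v u = axis (k u) 1"
    using independent_change_to_axes[OF assms(2)] by metis
  have g: "g *v axis (k u) 1 = u" if "u \<in> ?U" for u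
    using h[OF that] gh by (metis matrix_vector_mul_assoc matrix_vector_mul_lid)
  have distinct: "distinct [k u0, k u1, k u2, k u3]"
    using assms(1) k by (auto simp: inj_on_eq_iff)
  define M where "M = h ** (wedge u0 p + wedge u1 q) ** transpose h"
  have "M = wedge (axis (k u0) 1) (h *v p) + wedge (axis (k u1) 1) (h *v q)"
    by (simp add: M_def congruence_add congruence_wedge h)
  moreover have "M = wedge (axis (k u2) 1) (h *v r) + wedge (axis (k u3) 1) (h *v s)"
    by (simp add: M_def assms(3) congruence_add congruence_wedge h)
  ultimately have M: "M = wedge (axis (k u0) 1) (M$k u0$k u2 *s axis (k u2) 1 + M$k u0$k u3 *s axis (k u3) 1)
      + wedge (axis (k u1) 1) (M$k u1$k u2 *s axis (k u2) 1 + M$k u1$k u3 *s axis (k u3) 1)"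
    using wedge_axis_pairs_inter[OF distinct] by blast
  have "wedge u0 p + wedge u1 q = g ** M ** transpose g"
    unfolding M_def using congruence_inverse[OF gh] by simp
  also have "\<dots> = wedge u0 (M$k u0$k u2 *s u2 + M$k u0$k u3 *s u3)
      + wedge u1 (M$k u1$k u2 *s u2 + M$k u1$k u3 *s u3)"
    by (subst M) (simp add: congruence_add congruence_wedge matrix_vector_right_distrib vector_scalar_commute g)
  finally show ?thesis
    by (rule that)
qed

lemma vspan2_disjoint_independent:
  assumes "vindep2 u0 u1" "vindep2 u2 u3" "vspan2 u0 u1 \<inter> vspan2 u2 u3 = {0}"
  shows "distinct [u0, u1, u2, u3]" and "vec.independent {u0, u1, u2, u3}"
proof -
  have coeffs: "a = 0 \<and> b = 0 \<and> c = 0 \<and> d = 0"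
    if "a *s u0 + b *s u1 + c *s u2 + d *s u3 = 0" for a b c d
  proof -
    have "a *s u0 + b *s u1 = - (c *s u2 + d *s u3)"
      using that by (simp only: eq_neg_iff_add_eq_0 add.assoc)
    also have "\<dots> = (- c) *s u2 + (- d) *s u3"
      by (simp add: vec_eq_iff)
    finally have eq: "a *s u0 + b *s u1 = (- c) *s u2 + (- d) *s u3" .
    have "a *s u0 + b *s u1 \<in> vspan2 u0 u1"
      unfolding vspan2_def by blast
    moreover have "a *s u0 + b *s u1 \<in> vspan2 u2 u3"
      unfolding vspan2_def eq by blast
    ultimately have "a *s u0 + b *s u1 = 0"
      using assms(3) by blast
    then have "a = 0 \<and> b = 0" and "- c = 0 \<and> - d = 0"
      using assms(1)[unfolded vindep2_def, rule_format, of a b]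
        assms(2)[unfolded vindep2_def, rule_format, of "- c" "- d"] eq
      by simp_all
    then show ?thesis
      by simp
  qed
  show distinct: "distinct [u0, u1, u2, u3]"
    using coeffs[of 1 "-1" 0 0] coeffs[of 1 0 "-1" 0] coeffs[of 1 0 0 "-1"]
      coeffs[of 0 1 "-1" 0] coeffs[of 0 1 0 "-1"] coeffs[of 0 0 1 "-1"]
    by auto
  have "\<forall>v\<in>{u0, u1, u2, u3}. w v = 0" if "(\<Sum>v\<in>{u0, u1, u2, u3}. w v *s v) = 0" for w
  proof -
    have "w u0 *s u0 + w u1 *s u1 + w u2 *s u2 + w u3 *s u3 = 0"
      using that distinct by (simp add: add.assoc)
    then show ?thesis
      using coeffs by simp
  qed
  then show "vec.independent {u0, u1, u2, u3}"
    by (auto simp: vec.dependent_finite)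
qed

lemma vspan2_change_basis:
  assumes "vindep2 u v" and det: "A * E - B * C \<noteq> 0"
  shows "vindep2 (A *s u + B *s v) (C *s u + E *s v)"
    and "vspan2 (A *s u + B *s v) (C *s u + E *s v) = vspan2 u v"
proof -
  have lin: "x *s (A *s u + B *s v) + y *s (C *s u + E *s v) = (x * A + y * C) *s u + (x * B + y * E) *s v"
    for x y
    by (simp add: vec_eq_iff algebra_simps)
  show "vindep2 (A *s u + B *s v) (C *s u + E *s v)"
    unfolding vindep2_def
  proof (intro allI impI)
    fix x y
    assume "x *s (A *s u + B *s v) + y *s (C *s u + E *s v) = 0"
    then have "x * A + y * C = 0 \<and> x * B + y * E = 0"
      using assms(1)[unfolded vindep2_def, rule_format, of "x * A + y * C" "x * B + y * E"]
      by (simp only: lin)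
    moreover have "x * (A * E - B * C) = E * (x * A + y * C) - C * (x * B + y * E)"
      and "y * (A * E - B * C) = A * (x * B + y * E) - B * (x * A + y * C)"
      by (simp_all add: algebra_simps)
    ultimately show "x = 0 \<and> y = 0"
      using det by simp
  qed
  show "vspan2 (A *s u + B *s v) (C *s u + E *s v) = vspan2 u v"
  proof
    show "vspan2 (A *s u + B *s v) (C *s u + E *s v) \<subseteq> vspan2 u v"
      unfolding vspan2_def lin by blast
  next
    show "vspan2 u v \<subseteq> vspan2 (A *s u + B *s v) (C *s u + E *s v)"
    proof
      fix z assume "z \<in> vspan2 u v"
      then obtain a b where z: "z = a *s u + b *s v"
        unfolding vspan2_def by blast
      \<comment> \<open>Cramer's rule\<close>
      define x y where "x = (a * E - b * C) / (A * E - B * C)" and "y = (b * A - a * B) / (A * E - B * C)"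
      have "x * A + y * C = ((a * E - b * C) * A + (b * A - a * B) * C) / (A * E - B * C)"
        and "x * B + y * E = ((a * E - b * C) * B + (b * A - a * B) * E) / (A * E - B * C)"
        by (simp_all add: x_def y_def add_divide_distrib)
      also have "(a * E - b * C) * A + (b * A - a * B) * C = a * (A * E - B * C)"
        and "(a * E - b * C) * B + (b * A - a * B) * E = b * (A * E - B * C)"
        by (simp_all add: algebra_simps)
      ultimately have "x * A + y * C = a" "x * B + y * E = b"
        using det by simp_all
      then have "z = x *s (A *s u + B *s v) + y *s (C *s u + E *s v)"
        by (simp only: lin z)
      then show "z \<in> vspan2 (A *s u + B *s v) (C *s u + E *s v)"
        unfolding vspan2_def by blast
    qed
  qed
qed

theorem mainTheorem7:
  fixes L L' :: "cmat set" and D D' :: "cvec set" and \<omega> :: cmat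
  assumes "general_line L" and "general_line L'" and "L \<noteq> L'"
    and "\<omega> \<noteq> 0" and "\<omega> \<in> L" and "\<omega> \<in> L'"
    and "is_pivot L D" and "is_pivot L' D'"
    and "D \<inter> D' = {0}"
  shows "\<exists>e0 e1 e2 e3 (c::complex). vindep2 e0 e1 \<and> D = vspan2 e0 e1 \<and>
           vindep2 e2 e3 \<and> D' = vspan2 e2 e3 \<and>
           c \<noteq> 0 \<and> \<omega> = msc c (wedge e0 e2 + wedge e1 e3)"
proof -
  obtain u0 u1 p q where D: "vindep2 u0 u1" "D = vspan2 u0 u1" and pq: "\<omega> = wedge u0 p + wedge u1 q"
    using is_pivot_point[OF assms(7,5)] by metis
  obtain u2 u3 r s where D': "vindep2 u2 u3" "D' = vspan2 u2 u3" and rs: "\<omega> = wedge u2 r + wedge u3 s"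
    using is_pivot_point[OF assms(8,6)] by metis
  have "vspan2 u0 u1 \<inter> vspan2 u2 u3 = {0}"
    using assms(9) D(2) D'(2) by simp
  then obtain A B C E where \<omega>: "\<omega> = wedge u0 (A *s u2 + B *s u3) + wedge u1 (C *s u2 + E *s u3)"
    using wedge_pairs_inter[OF vspan2_disjoint_independent[OF D(1) D'(1)]] pq rs by metis
  have det: "A * E - B * C \<noteq> 0"
    using wedge_pairs_decomposable \<omega> general_line_point_not_wedge[OF assms(1,5,4)]
    by (metis eq_iff_diff_eq_0)
  have "\<omega> = msc 1 (wedge u0 (A *s u2 + B *s u3) + wedge u1 (C *s u2 + E *s u3))"
    using \<omega> by (simp add: msc_def vec_eq_iff)
  then show ?thesis
    using D D' vspan2_change_basis[OF D'(1) det]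
    by (intro exI[of _ u0] exI[of _ u1] exI[of _ "A *s u2 + B *s u3"] exI[of _ "C *s u2 + E *s u3"]
        exI[of _ 1]) simp
qed

end
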